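(* Let $\mathsf{NL}+\{\mathrm{S}\}$ be the system $\mathsf{NL}$ extended by the axiom scheme (S) $(\varphi\otimes\psi)\Rightarrow\varphi$. Then $\mathsf{NL}+\{\mathrm{S}\}$ is inconsistent, i.e. every formula is a theorem of it.
   Context: Formulas are built from a countably infinite set of propositional variables using the binary connectives $\otimes$ (conjunction), $\circ$ (compatibility) and the unary connective ${}^{*}$ (negation). Abbreviations: $\varphi\Rightarrow\psi:=(\varphi\circ\psi^{*})^{*}$; $\varphi\Leftrightarrow\psi:=(\varphi\Rightarrow\psi)\otimes(\psi\Rightarrow\varphi)$; $\varphi\not\Leftrightarrow\psi:=(\varphi\Leftrightarrow\psi)^{*}$; $\varphi\not\Leftrightarrow\psi\not\Leftrightarrow\chi:=((\varphi\not\Leftrightarrow\psi)\otimes(\varphi\not\Leftrightarrow\chi))\otimes(\psi\not\Leftrightarrow\chi)$. Axiom schemes: (A1) $\varphi\Rightarrow\varphi$; (A2) $(\varphi\circ\psi)\Rightarrow(\psi\circ\varphi)$; (A3) $\varphi\Rightarrow\varphi^{**}$; (A4) $(\varphi\Rightarrow\psi)\Rightarrow(\varphi\circ\psi)$; (A5) $(\varphi\otimes\psi)\Leftrightarrow(\psi\otimes\varphi)$; (A6) $((\varphi\otimes\psi)\Rightarrow\chi)\Rightarrow((\varphi\otimes\chi^{*})\Rightarrow\psi^{*})$; (A7) $(\varphi\not\Leftrightarrow\psi\not\Leftrightarrow\chi)\Rightarrow((\varphi\Rightarrow\psi)\Rightarrow((\psi\Rightarrow\chi)\Rightarrow(\varphi\Rightarrow\chi)))$.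 The theorems of $\mathsf{NL}$ form the least set of formulas containing all instances of (A1)–(A7) and closed under the following rules, which apply only to theorems: (MP) from theorems $\varphi\Rightarrow\psi$ and $\varphi$ infer $\psi$; (Adj) from theorems $\varphi,\psi$ infer $\varphi\otimes\psi$; $(\mathrm{Eq})_1$ from theorems $\varphi\Leftrightarrow\psi$ and $\chi$ infer $\chi'$, where $\chi'$ is obtained from $\chi$ by replacing one or more occurrences of $\varphi$ by $\psi$; (CE) from a theorem $\varphi\otimes\psi$ infer $\varphi$. Extending $\mathsf{NL}$ by an axiom scheme means adding all its instances to the initial set. *)

theory Defs
  imports Main
begin

datatype fm = Var nat | Conj fm fm | Comp fm fm | Neg fm

definition Imp :: "fm \<Rightarrow> fm \<Rightarrow> fm" where
  "Imp a b = Neg (Comp a (Neg b))"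
definition Iff :: "fm \<Rightarrow> fm \<Rightarrow> fm" where
  "Iff a b = Conj (Imp a b) (Imp b a)"
definition NIff :: "fm \<Rightarrow> fm \<Rightarrow> fm" where
  "NIff a b = Neg (Iff a b)"
definition NIff3 :: "fm \<Rightarrow> fm \<Rightarrow> fm \<Rightarrow> fm" where
  "NIff3 a b c = Conj (Conj (NIff a b) (NIff a c)) (NIff b c)"

inductive repl :: "fm \<Rightarrow> fm \<Rightarrow> fm \<Rightarrow> fm \<Rightarrow> bool" for a b where
  here: "repl a b a b"
| conjL: "repl a b x x' \<Longrightarrow> repl a b (Conj x y) (Conj x' y)"
| conjR: "repl a b y y' \<Longrightarrow> repl a b (Conj x y) (Conj x y')"
| conjB: "repl a b x x' \<Longrightarrow> repl a b y y' \<Longrightarrow> repl a b (Conj x y) (Conj x' y')"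
| compL: "repl a b x x' \<Longrightarrow> repl a b (Comp x y) (Comp x' y)"
| compR: "repl a b y y' \<Longrightarrow> repl a b (Comp x y) (Comp x y')"
| compB: "repl a b x x' \<Longrightarrow> repl a b y y' \<Longrightarrow> repl a b (Comp x y) (Comp x' y')"
| neg: "repl a b x x' \<Longrightarrow> repl a b (Neg x) (Neg x')"

inductive NLS :: "fm \<Rightarrow> bool" where
  A1: "NLS (Imp p p)"
| A2: "NLS (Imp (Comp p q) (Comp q p))"
| A3: "NLS (Imp p (Neg (Neg p)))"
| A4: "NLS (Imp (Imp p q) (Comp p q))"
| A5: "NLS (Iff (Conj p q) (Conj q p))"
| A6: "NLS (Imp (Imp (Conj p q) r) (Imp (Conj p (Neg r)) (Neg q)))"
| A7: "NLS (Imp (NIff3 p q r) (Imp (Imp p q) (Imp (Imp q r) (Imp p r))))"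
| S: "NLS (Imp (Conj p q) p)"
| MP: "NLS (Imp p q) \<Longrightarrow> NLS p \<Longrightarrow> NLS q"
| Adj: "NLS p \<Longrightarrow> NLS q \<Longrightarrow> NLS (Conj p q)"
| Eq1: "NLS (Iff p q) \<Longrightarrow> NLS c \<Longrightarrow> repl p q c c' \<Longrightarrow> NLS c'"
| CE: "NLS (Conj p q) \<Longrightarrow> NLS p"

end

theory Submission
  imports Defs
begin

text \<open>
  Under (S) the formula \<open>c \<otimes> c\<^sup>*\<close> implies \<open>c\<close> and, after commuting the
  conjunction with (A5), also \<open>c\<^sup>*\<close>. Since \<open>a \<Rightarrow> b\<close> is literally \<open>(a \<circ> b\<^sup>*)\<^sup>*\<close>,
  the first theorem is the negation of \<open>P = (c \<otimes> c\<^sup>*) \<circ> c\<^sup>*\<close>, while (A4) turns the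
  second into \<open>P\<close> itself. Axiom (A6) applied to the (S)-instance \<open>(P \<otimes> \<psi>) \<Rightarrow> P\<close> derives
  \<open>\<psi>\<^sup>*\<close> from \<open>P\<close> and \<open>P\<^sup>*\<close>, so every negation is a theorem; an arbitrary \<open>\<phi>\<close> then
  follows by (MP) from the negations \<open>\<psi>\<^sup>* \<Rightarrow> \<phi>\<close> and \<open>\<psi>\<^sup>*\<close>.
\<close>

lemma NLS_Imp_Conj_right: "NLS (Imp (Conj p q) q)"
proof -
  have "repl (Conj q p) (Conj p q) (Imp (Conj q p) q) (Imp (Conj p q) q)"
    unfolding Imp_def by (intro repl.neg repl.compL repl.here)
  from NLS.Eq1[OF NLS.A5 NLS.S this] show ?thesis .
qed

lemma NLS_Neg_if_contradictory:
  assumes "NLS p" and "NLS (Neg p)"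
  shows "NLS (Neg q)"
proof -
  have "NLS (Imp (Conj p (Neg p)) (Neg q))"
    by (rule NLS.MP[OF NLS.A6 NLS.S])
  from NLS.MP[OF this NLS.Adj[OF assms]] show ?thesis .
qed

lemma NLS_Neg_if_Imp_contradictory:
  assumes "NLS (Imp a c)" and "NLS (Imp a (Neg c))"
  shows "NLS (Neg q)"
proof (rule NLS_Neg_if_contradictory)
  show "NLS (Comp a (Neg c))"
    using NLS.MP[OF NLS.A4 assms(2)] .
  show "NLS (Neg (Comp a (Neg c)))"
    using assms(1) unfolding Imp_def .
qed

lemma NLS_Neg: "NLS (Neg q)"
  using NLS.S NLS_Imp_Conj_right by (rule NLS_Neg_if_Imp_contradictory)

theorem proposition3p2:
  shows "\<forall>\<phi>. NLS \<phi>"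
proof
  fix \<phi> \<psi>
  have "NLS (Imp (Neg \<psi>) \<phi>)"
    unfolding Imp_def by (rule NLS_Neg)
  from NLS.MP[OF this NLS_Neg] show "NLS \<phi>" .
qed

end
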